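(* Let $n\ge 3$ and consider $H^{(3)}(t)=H^{(2)}(t)+\sum_{i<j<k}a^{(3)}_{ijk}(t)Z_iZ_jZ_k$, $0\le t\le T$, where $H^{(2)}(t)$ is at every time U(1)-invariant and 2-local and the $a^{(3)}_{ijk}$ are real piecewise-continuous functions. Then $$\beta_3=\Delta_3=-8\int_0^T\sum_{i<j<k}a^{(3)}_{ijk}(t)\,dt\pmod{2\pi},$$ where $\beta_3=\binom{n}{3}\theta_0-\binom{n-1}{2}\theta_1+(n-2)\theta_2-\theta_3\pmod{2\pi}$.
   Context: Qubits $1,\dots,n$, Hilbert space $(\mathbb{C}^2)^{\otimes n}$, $Z_j$ the Pauli $Z$ on qubit $j$. An operator is 2-local if it is a sum of terms each acting non-trivially on at most 2 qubits. For $m=0,\dots,n$, $\Pi_m$ is the projector onto the span of computational basis states with exactly $m$ qubits in state $|1\rangle$. A Hamiltonian is U(1)-invariant if it commutes with $\sum_j Z_j$. For such $H(t)$, $V=\mathcal{T}\exp(-i\int_0^TH(t)dt)$ (time-ordered exponential) satisfies $V=\bigoplus_mV_m$ with $V_m$ the restriction of $V$ to the range of $\Pi_m$; $\theta_m=\arg\det(V_m)\in(-\pi,\pi]$, and $\Delta_3=\theta_{n-1}-\theta_1-(n-2)(\theta_n-\theta_0)\pmod{2\pi}$. *)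

theory Defs
  imports "HOL-Analysis.Analysis"
begin

text \<open>Operators on n qubits are complex matrices indexed by computational basis states
  x < 2^n; bit j of x (j < n) is the state of qubit j+1. Matrices: nat => nat => complex.\<close>

type_synonym op = "nat \<Rightarrow> nat \<Rightarrow> complex"

definition dimq :: "nat \<Rightarrow> nat" where "dimq n = 2 ^ n"

definition op_mult :: "nat \<Rightarrow> op \<Rightarrow> op \<Rightarrow> op" where
  "op_mult n A B = (\<lambda>x y. \<Sum>k<dimq n. A x k * B k y)"

definition op_id :: op where "op_id = (\<lambda>x y. if x = y then 1 else 0)"

definition pauliZ :: "nat \<Rightarrow> op" where
  "pauliZ j = (\<lambda>x y. if x = y then (if bit x j then -1 else 1) else 0)"

definition totalZ :: "nat \<Rightarrow> op" where
  "totalZ n = (\<lambda>x y. \<Sum>j<n. pauliZ j x y)"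

definition weight :: "nat \<Rightarrow> nat \<Rightarrow> nat" where
  "weight n x = card {j. j < n \<and> bit x j}"

text \<open>Basis states spanning the range of Pi_m.\<close>
definition sector :: "nat \<Rightarrow> nat \<Rightarrow> nat set" where
  "sector n m = {x. x < dimq n \<and> weight n x = m}"

definition hermitian_op :: "nat \<Rightarrow> op \<Rightarrow> bool" where
  "hermitian_op n H \<longleftrightarrow> (\<forall>x<dimq n. \<forall>y<dimq n. H x y = cnj (H y x))"

definition u1_invariant :: "nat \<Rightarrow> op \<Rightarrow> bool" where
  "u1_invariant n H \<longleftrightarrow>
     (\<forall>x<dimq n. \<forall>y<dimq n. op_mult n H (totalZ n) x y = op_mult n (totalZ n) H x y)"

text \<open>A acts non-trivially only on the qubits in S (i.e. A = A_S \<otimes> Id on the complement).\<close>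
definition acts_only_on :: "nat \<Rightarrow> nat set \<Rightarrow> op \<Rightarrow> bool" where
  "acts_only_on n S A \<longleftrightarrow>
     (\<forall>x<dimq n. \<forall>y<dimq n. (\<exists>j<n. j \<notin> S \<and> bit x j \<noteq> bit y j) \<longrightarrow> A x y = 0) \<and>
     (\<forall>x<dimq n. \<forall>y<dimq n. \<forall>x'<dimq n. \<forall>y'<dimq n.
        (\<forall>j<n. j \<notin> S \<longrightarrow> bit x j = bit y j) \<and> (\<forall>j<n. j \<notin> S \<longrightarrow> bit x' j = bit y' j) \<and>
        (\<forall>j\<in>S. bit x j = bit x' j \<and> bit y j = bit y' j) \<longrightarrow> A x y = A x' y')"

definition two_local :: "nat \<Rightarrow> op \<Rightarrow> bool" where
  "two_local n H \<longleftrightarrow>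
     (\<exists>A. (\<forall>S. acts_only_on n S (A S)) \<and>
          (\<forall>x<dimq n. \<forall>y<dimq n.
             H x y = (\<Sum>S\<in>{S. S \<subseteq> {..<n} \<and> card S \<le> 2}. A S x y)))"

definition piecewise_continuous_on :: "real \<Rightarrow> real \<Rightarrow> (real \<Rightarrow> 'a::real_normed_vector) \<Rightarrow> bool" where
  "piecewise_continuous_on a b f \<longleftrightarrow>
     (\<exists>D. finite D \<and> continuous_on ({a..b} - D) f \<and>
        (\<forall>x\<in>D. (\<exists>l. (f \<longlongrightarrow> l) (at x within {a..<x})) \<and>
                (\<exists>l. (f \<longlongrightarrow> l) (at x within {x<..b}))))"

definition time_ordered_exp :: "nat \<Rightarrow> real \<Rightarrow> (real \<Rightarrow> op) \<Rightarrow> (real \<Rightarrow> op) \<Rightarrow> bool" where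
  "time_ordered_exp n T H V \<longleftrightarrow>
     (\<forall>x<dimq n. \<forall>y<dimq n. continuous_on {0..T} (\<lambda>t. V t x y)) \<and>
     (\<forall>t\<in>{0..T}. \<forall>x<dimq n. \<forall>y<dimq n.
        \<exists>I. ((\<lambda>s. op_mult n (H s) (V s) x y) has_integral I) {0..t} \<and>
            V t x y = op_id x y - \<i> * I)"

definition det_on :: "nat set \<Rightarrow> op \<Rightarrow> complex" where
  "det_on B A = (\<Sum>p\<in>{p. p permutes B}. of_int (sign p) * (\<Prod>i\<in>B. A i (p i)))"

definition theta :: "nat \<Rightarrow> op \<Rightarrow> nat \<Rightarrow> real" where
  "theta n V m = Arg (det_on (sector n m) V)"

definition cong_2pi :: "real \<Rightarrow> real \<Rightarrow> bool" where
  "cong_2pi a b \<longleftrightarrow> (\<exists>k::int. a - b = 2 * pi * of_int k)"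

definition Delta3 :: "nat \<Rightarrow> op \<Rightarrow> real" where
  "Delta3 n V = theta n V (n - 1) - theta n V 1 - (real n - 2) * (theta n V n - theta n V 0)"

definition beta3 :: "nat \<Rightarrow> op \<Rightarrow> real" where
  "beta3 n V = real (n choose 3) * theta n V 0 - real ((n - 1) choose 2) * theta n V 1
              + (real n - 2) * theta n V 2 - theta n V 3"

definition H3 :: "nat \<Rightarrow> (real \<Rightarrow> op) \<Rightarrow> (nat \<Rightarrow> nat \<Rightarrow> nat \<Rightarrow> real \<Rightarrow> real) \<Rightarrow> real \<Rightarrow> op" where
  "H3 n H2 a t = (\<lambda>x y. H2 t x y +
     (\<Sum>(i,j,k)\<in>{(i,j,k). i < j \<and> j < k \<and> k < n}.
        complex_of_real (a i j k t) *
        op_mult n (pauliZ i) (op_mult n (pauliZ j) (pauliZ k)) x y))"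

end

theory Submission
  imports Defs
begin

text \<open>Since H3(t) commutes with the total Z, V is block diagonal with respect to the Hamming-weight
  sectors, and Liouville's formula for each block gives theta_m = - integral of tr(Pi_m H3(t))
  modulo 2 pi. For an operator acting only on a set S of qubits, tr(Pi_m A) is a combination of
  the binomials C(n - |S|, m - k) with k \<le> |S|. Both Delta_3 and beta_3 are integer combinations
  of the theta_m that annihilate these binomials when |S| \<le> 2 and take the value 8 on
  tr(Pi_m Z_i Z_j Z_k), so both are congruent to -8 times the integral of the three-body couplings.\<close>

section \<open>Integer combinations of sector phases\<close>

definition lincomb :: "(nat \<times> real) list \<Rightarrow> (nat \<Rightarrow> 'a::real_algebra_1) \<Rightarrow> 'a" where
  "lincomb W f = (\<Sum>(m, c) \<leftarrow> W. of_real c * f m)"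

lemma lincomb_Nil [simp]: "lincomb [] f = 0"
  and lincomb_Cons [simp]: "lincomb ((m, c) # W) f = of_real c * f m + lincomb W f"
  by (simp_all add: lincomb_def)

lemma lincomb_sum:
  fixes f :: "'i \<Rightarrow> nat \<Rightarrow> 'a::{real_algebra_1, comm_ring_1}"
  shows "lincomb W (\<lambda>m. \<Sum>i\<in>I. f i m) = (\<Sum>i\<in>I. lincomb W (f i))"
  by (induction W) (auto simp: sum_distrib_left sum.distrib)

lemma lincomb_add:
  "lincomb W (\<lambda>m. f m + g m) = lincomb W f + (lincomb W g :: 'a::{real_algebra_1, comm_ring_1})"
  by (induction W) (auto simp: algebra_simps)

lemma lincomb_mult_left:
  "lincomb W (\<lambda>m. c * f m) = c * (lincomb W f :: 'a::{real_algebra_1, comm_ring_1})"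
  by (induction W) (auto simp: algebra_simps)

lemma lincomb_minus: "lincomb W (\<lambda>m. - f m) = - (lincomb W f :: 'a::real_algebra_1)"
  by (induction W) auto

lemma lincomb_of_real: "lincomb W (\<lambda>m. of_real (f m)) = (of_real (lincomb W f) :: 'a::real_algebra_1)"
  by (induction W) auto

lemma lincomb_of_nat: "lincomb W (\<lambda>m. of_nat (f m)) = (of_real (lincomb W (\<lambda>m. real (f m))) :: 'a::real_algebra_1)"
  by (induction W) auto

lemma Re_lincomb: "Re (lincomb W f) = lincomb W (\<lambda>m. Re (f m))"
  by (induction W) auto

lemma has_integral_lincomb:
  fixes g :: "nat \<Rightarrow> real \<Rightarrow> real"
  assumes "\<And>m. g m integrable_on S"
  shows "((\<lambda>t. lincomb W (\<lambda>m. g m t)) has_integral lincomb W (\<lambda>m. integral S (g m))) S"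
  by (induction W) (auto intro!: has_integral_add has_integral_mult_right assms)

lemma cong_2pi_refl: "cong_2pi a a"
  by (auto simp: cong_2pi_def intro: exI[of _ 0])

lemma cong_2pi_sym: "cong_2pi a b \<Longrightarrow> cong_2pi b a"
  unfolding cong_2pi_def by (metis minus_diff_eq mult_minus_right of_int_minus)

lemma cong_2pi_trans: "cong_2pi a b \<Longrightarrow> cong_2pi b c \<Longrightarrow> cong_2pi a c"
  unfolding cong_2pi_def by (metis (no_types, opaque_lifting) diff_add_cancel add_diff_eq distrib_left of_int_add)

lemma cong_2pi_lincomb:
  assumes "\<forall>(m, c) \<in> set W. c \<in> \<int>" and "\<And>m. cong_2pi (f m) (g m)"
  shows "cong_2pi (lincomb W f) (lincomb W g)"
  using assms(1)
proof (induction W)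
  case Nil
  show ?case by (simp add: cong_2pi_refl)
next
  case (Cons p W)
  obtain m c where p: "p = (m, c)" by fastforce
  then obtain j :: int where j: "c = of_int j" using Cons.prems by (auto elim: Ints_cases)
  obtain k :: int where k: "f m - g m = 2 * pi * of_int k" using assms(2) unfolding cong_2pi_def by blast
  obtain l :: int where l: "lincomb W f - lincomb W g = 2 * pi * of_int l"
    using Cons unfolding cong_2pi_def by auto
  have "lincomb (p # W) f - lincomb (p # W) g = 2 * pi * of_int (j * k + l)"
    using k l by (simp add: p j algebra_simps flip: right_diff_distrib)
  then show ?case unfolding cong_2pi_def by blast
qed

section \<open>Traces over weight sectors\<close>

lemma bit_iff_in_set_decode: "bit (x::nat) j \<longleftrightarrow> j \<in> set_decode x"
  by (simp add: set_decode_def bit_iff_odd)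

lemma set_decode_subset_lessThan: "(x::nat) < 2 ^ n \<Longrightarrow> set_decode x \<subseteq> {..<n}"
proof
  fix j assume "x < 2 ^ n" "j \<in> set_decode x"
  then have "bit (take_bit n x) j" by (simp add: bit_iff_in_set_decode take_bit_nat_eq_self)
  then show "j \<in> {..<n}" by (simp add: bit_take_bit_iff)
qed

lemma set_encode_less_power: "X \<subseteq> {..<n} \<Longrightarrow> set_encode X < 2 ^ n"
proof (induction n arbitrary: X)
  case (Suc n)
  have fin: "finite (X - {n})"
    using Suc.prems finite_subset by blast
  have IH: "set_encode (X - {n}) < 2 ^ n"
    using Suc.prems by (intro Suc.IH) (auto simp: less_Suc_eq)
  show ?case
  proof (cases "n \<in> X")
    case True
    then have "set_encode X = 2 ^ n + set_encode (X - {n})"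
      using fin by (metis Diff_iff insertI1 insert_Diff set_encode_insert)
    then show ?thesis using IH by simp
  next
    case False
    then show ?thesis using IH by simp
  qed
qed simp

definition subsets_of_card :: "nat \<Rightarrow> nat \<Rightarrow> nat set set" where
  "subsets_of_card n m = {X. X \<subseteq> {..<n} \<and> card X = m}"

lemma weight_eq_card_set_decode: "x < 2 ^ n \<Longrightarrow> weight n x = card (set_decode x)"
proof -
  assume "x < 2 ^ n"
  then have "{j. j < n \<and> bit x j} = set_decode x"
    using set_decode_subset_lessThan[of x n] by (auto simp: bit_iff_in_set_decode)
  then show ?thesis by (simp add: weight_def)
qed

lemma sector_eq_image_set_encode: "sector n m = set_encode ` subsets_of_card n m"
proof (intro equalityI subsetI)
  fix x assume "x \<in> sector n m"
  then have x: "x < 2 ^ n" "weight n x = m" by (auto simp: sector_def dimq_def)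
  then have "set_decode x \<in> subsets_of_card n m"
    using set_decode_subset_lessThan weight_eq_card_set_decode by (simp add: subsets_of_card_def)
  then show "x \<in> set_encode ` subsets_of_card n m" by (metis image_eqI set_decode_inverse)
next
  fix x assume "x \<in> set_encode ` subsets_of_card n m"
  then obtain X where X: "X \<subseteq> {..<n}" "card X = m" "x = set_encode X"
    by (auto simp: subsets_of_card_def)
  then have "finite X" using finite_subset by blast
  with X show "x \<in> sector n m"
    using set_encode_less_power weight_eq_card_set_decode by (auto simp: sector_def dimq_def)
qed

lemma sum_sector: "(\<Sum>x\<in>sector n m. g x) = (\<Sum>X\<in>subsets_of_card n m. g (set_encode X))"
proof -
  have "inj_on set_encode (subsets_of_card n m)"
    by (rule inj_on_subset[OF inj_on_set_encode]) (auto simp: subsets_of_card_def intro: finite_subset)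
  then show ?thesis unfolding sector_eq_image_set_encode by (simp add: sum.reindex)
qed

definition ext_count :: "nat \<Rightarrow> nat \<Rightarrow> nat \<Rightarrow> nat \<Rightarrow> nat" where
  "ext_count n c k m = (if k \<le> m then (n - c) choose (m - k) else 0)"

lemma bij_betw_Un_subsets_of_card_meeting:
  assumes S: "S \<subseteq> {..<n}" and s: "s \<subseteq> S" and m: "card s \<le> m"
  shows "bij_betw (\<lambda>Y. Y \<union> s) {Y. Y \<subseteq> {..<n} - S \<and> card Y = m - card s}
           {X \<in> subsets_of_card n m. X \<inter> S = s}"
proof (rule bij_betw_byWitness[where f'="\<lambda>X. X - S"])
  have fs: "finite s" using finite_subset[OF subset_trans[OF s S]] by simp
  show "\<forall>Y\<in>{Y. Y \<subseteq> {..<n} - S \<and> card Y = m - card s}. Y \<union> s - S = Y" using s by auto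
  show "\<forall>X\<in>{X \<in> subsets_of_card n m. X \<inter> S = s}. X - S \<union> s = X" by auto
  show "(\<lambda>Y. Y \<union> s) ` {Y. Y \<subseteq> {..<n} - S \<and> card Y = m - card s} \<subseteq> {X \<in> subsets_of_card n m. X \<inter> S = s}"
  proof
    fix X assume "X \<in> (\<lambda>Y. Y \<union> s) ` {Y. Y \<subseteq> {..<n} - S \<and> card Y = m - card s}"
    then obtain Y where Y: "Y \<subseteq> {..<n} - S" "card Y = m - card s" "X = Y \<union> s" by auto
    have "finite Y" using Y(1) finite_subset by blast
    moreover have "Y \<inter> s = {}" using Y s by auto
    ultimately have "card X = m" using Y m fs by (simp add: card_Un_disjoint)
    then show "X \<in> {X \<in> subsets_of_card n m. X \<inter> S = s}" using Y s S by (auto simp: subsets_of_card_def)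
  qed
  show "(\<lambda>X. X - S) ` {X \<in> subsets_of_card n m. X \<inter> S = s} \<subseteq> {Y. Y \<subseteq> {..<n} - S \<and> card Y = m - card s}"
  proof
    fix Y assume "Y \<in> (\<lambda>X. X - S) ` {X \<in> subsets_of_card n m. X \<inter> S = s}"
    then obtain X where X: "X \<subseteq> {..<n}" "card X = m" "X \<inter> S = s" "Y = X - S"
      by (auto simp: subsets_of_card_def)
    have "finite X" using X(1) finite_subset by blast
    moreover have "X = Y \<union> s" "Y \<inter> s = {}" using X by auto
    ultimately have "card X = card Y + card s" by (metis card_Un_disjoint finite_Un)
    then show "Y \<in> {Y. Y \<subseteq> {..<n} - S \<and> card Y = m - card s}" using X by auto
  qed
qed

lemma card_subsets_of_card_meeting:
  assumes S: "S \<subseteq> {..<n}" and s: "s \<subseteq> S"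
  shows "card {X \<in> subsets_of_card n m. X \<inter> S = s} = ext_count n (card S) (card s) m"
proof (cases "card s \<le> m")
  case False
  have "{X \<in> subsets_of_card n m. X \<inter> S = s} = {}"
  proof (rule ccontr)
    assume "{X \<in> subsets_of_card n m. X \<inter> S = s} \<noteq> {}"
    then obtain X where X: "X \<subseteq> {..<n}" "card X = m" "X \<inter> S = s" by (auto simp: subsets_of_card_def)
    then have "card s \<le> card X" by (intro card_mono) (auto intro: finite_subset)
    then show False using False X by simp
  qed
  then show ?thesis using False by (simp only: ext_count_def card.empty) simp
next
  case True
  have "card {X \<in> subsets_of_card n m. X \<inter> S = s} = card {Y. Y \<subseteq> {..<n} - S \<and> card Y = m - card s}"
    using bij_betw_Un_subsets_of_card_meeting[OF S s True] by (simp add: bij_betw_same_card)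
  also have "\<dots> = card ({..<n} - S) choose (m - card s)" by (rule n_subsets) simp
  moreover have "finite S" using S finite_subset by blast
  ultimately show ?thesis using True S by (simp add: ext_count_def card_Diff_subset)
qed

lemma sum_sector_local:
  fixes g :: "nat \<Rightarrow> 'a::comm_semiring_1"
  assumes S: "S \<subseteq> {..<n}"
    and loc: "\<And>x x'. x < dimq n \<Longrightarrow> x' < dimq n \<Longrightarrow> (\<forall>j\<in>S. bit x j = bit x' j) \<Longrightarrow> g x = g x'"
  shows "(\<Sum>x\<in>sector n m. g x) = (\<Sum>s\<in>Pow S. g (set_encode s) * of_nat (ext_count n (card S) (card s) m))"
proof -
  have fS: "finite S" using S finite_subset by blast
  have fin: "finite (subsets_of_card n m)"
    by (rule finite_subset[of _ "Pow {..<n}"]) (auto simp: subsets_of_card_def)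
  have "(\<Sum>x\<in>sector n m. g x) = (\<Sum>X\<in>subsets_of_card n m. g (set_encode (X \<inter> S)))"
    unfolding sum_sector
  proof (intro sum.cong refl loc)
    fix X assume "X \<in> subsets_of_card n m"
    then have X: "X \<subseteq> {..<n}" "finite X" by (auto simp: subsets_of_card_def intro: finite_subset)
    then show "set_encode X < dimq n" "set_encode (X \<inter> S) < dimq n"
      using set_encode_less_power[of X n] set_encode_less_power[of "X \<inter> S" n] by (auto simp: dimq_def)
    show "\<forall>j\<in>S. bit (set_encode X) j = bit (set_encode (X \<inter> S)) j"
      using X by (simp add: bit_iff_in_set_decode)
  qed
  also have "\<dots> = (\<Sum>s\<in>Pow S. \<Sum>X\<in>{X \<in> subsets_of_card n m. X \<inter> S = s}. g (set_encode (X \<inter> S)))"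
    by (rule sum.group[symmetric]) (use fin fS in auto)
  also have "\<dots> = (\<Sum>s\<in>Pow S. g (set_encode s) * of_nat (ext_count n (card S) (card s) m))"
    by (intro sum.cong refl) (simp add: card_subsets_of_card_meeting[OF S] mult.commute)
  finally show ?thesis .
qed

lemma sum_Pow_by_card:
  fixes F :: "nat \<Rightarrow> 'a::comm_semiring_1"
  assumes "finite S"
  shows "(\<Sum>s\<in>Pow S. F (card s)) = (\<Sum>k\<le>card S. of_nat (card S choose k) * F k)"
proof -
  have "(\<Sum>s\<in>Pow S. F (card s)) = (\<Sum>k\<le>card S. \<Sum>s\<in>{s \<in> Pow S. card s = k}. F (card s))"
    by (rule sum.group[symmetric]) (use assms in \<open>auto intro: card_mono\<close>)
  also have "\<dots> = (\<Sum>k\<le>card S. of_nat (card S choose k) * F k)"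
  proof (intro sum.cong refl)
    fix k
    have "{s \<in> Pow S. card s = k} = {s. s \<subseteq> S \<and> card s = k}" by auto
    then have "card {s \<in> Pow S. card s = k} = card S choose k" using n_subsets[OF assms] by simp
    then show "(\<Sum>s\<in>{s \<in> Pow S. card s = k}. F (card s)) = of_nat (card S choose k) * F k"
      by simp
  qed
  finally show ?thesis .
qed

text \<open>The sector traces of an operator acting on c \<le> 2 qubits are combinations of the functions
  ext_count n c k, and that of Z_i Z_j Z_k is the inner sum below; a three-body functional
  is blind to the former and sees the latter with weight 8.\<close>

definition three_body_functional :: "nat \<Rightarrow> (nat \<times> real) list \<Rightarrow> bool" where
  "three_body_functional n W \<longleftrightarrow>
     (\<forall>c k. k \<le> c \<longrightarrow> c \<le> 2 \<longrightarrow> lincomb W (\<lambda>m. real (ext_count n c k m)) = 0) \<and>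
     lincomb W (\<lambda>m. \<Sum>l\<le>3. (-1) ^ l * real (3 choose l) * real (ext_count n 3 l m)) = 8"

definition delta3_coeffs :: "nat \<Rightarrow> (nat \<times> real) list" where
  "delta3_coeffs n = [(n - 1, 1), (1, -1), (n, - (real n - 2)), (0, real n - 2)]"

definition beta3_coeffs :: "nat \<Rightarrow> (nat \<times> real) list" where
  "beta3_coeffs n = [(0, real (n choose 3)), (1, - real ((n - 1) choose 2)), (2, real n - 2), (3, -1)]"

lemma Delta3_eq_lincomb: "Delta3 n V = lincomb (delta3_coeffs n) (theta n V)"
  by (simp add: Delta3_def delta3_coeffs_def algebra_simps)

lemma beta3_eq_lincomb: "beta3 n V = lincomb (beta3_coeffs n) (theta n V)"
  by (simp add: beta3_def beta3_coeffs_def algebra_simps)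

lemma delta3_coeffs_Ints: "\<forall>(m, c) \<in> set (delta3_coeffs n). c \<in> \<int>"
  by (simp add: delta3_coeffs_def)

lemma beta3_coeffs_Ints: "\<forall>(m, c) \<in> set (beta3_coeffs n). c \<in> \<int>"
  by (simp add: beta3_coeffs_def)

lemma real_choose_two: "real (m choose 2) = real m * (real m - 1) / 2"
  by (induction m) (simp_all add: numeral_2_eq_2 field_simps)

lemma real_choose_three: "real (m choose 3) = real m * (real m - 1) * (real m - 2) / 6"
  by (induction m) (simp_all add: numeral_3_eq_3 real_choose_two[unfolded numeral_2_eq_2] field_simps)

lemma three_body_functional_delta3:
  assumes "n \<ge> 3"
  shows "three_body_functional n (delta3_coeffs n)"
proof -
  obtain N where n: "n = Suc (Suc (Suc N))" using assms by (metis add_Suc le_Suc_ex numeral_3_eq_3 add_0)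
  have "k \<le> c \<Longrightarrow> c \<le> 2 \<Longrightarrow> lincomb (delta3_coeffs n) (\<lambda>m. real (ext_count n c k m)) = 0" for c k
    by (auto simp: le_Suc_eq numeral_2_eq_2 delta3_coeffs_def ext_count_def n real_choose_two
        binomial_Suc_n binomial_eq_0 field_simps)
  moreover have "lincomb (delta3_coeffs n) (\<lambda>m. \<Sum>l\<le>3. (-1) ^ l * real (3 choose l) * real (ext_count n 3 l m)) = 8"
    by (cases N) (simp_all add: delta3_coeffs_def ext_count_def n real_choose_two real_choose_three
        binomial_Suc_n binomial_eq_0 numeral_3_eq_3 field_simps)
  ultimately show ?thesis unfolding three_body_functional_def by blast
qed

lemma three_body_functional_beta3:
  assumes "n \<ge> 3"
  shows "three_body_functional n (beta3_coeffs n)"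
proof -
  obtain N where n: "n = Suc (Suc (Suc N))" using assms by (metis add_Suc le_Suc_ex numeral_3_eq_3 add_0)
  have "k \<le> c \<Longrightarrow> c \<le> 2 \<Longrightarrow> lincomb (beta3_coeffs n) (\<lambda>m. real (ext_count n c k m)) = 0" for c k
    by (auto simp: le_Suc_eq numeral_2_eq_2 beta3_coeffs_def ext_count_def n real_choose_two
        real_choose_two[unfolded numeral_2_eq_2] real_choose_three binomial_Suc_n binomial_eq_0 field_simps)
  moreover have "lincomb (beta3_coeffs n) (\<lambda>m. \<Sum>l\<le>3. (-1) ^ l * real (3 choose l) * real (ext_count n 3 l m)) = 8"
    by (cases N) (simp_all add: beta3_coeffs_def ext_count_def n real_choose_two
        real_choose_two[unfolded numeral_2_eq_2] real_choose_three
        binomial_Suc_n binomial_eq_0 numeral_3_eq_3 field_simps)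
  ultimately show ?thesis unfolding three_body_functional_def by blast
qed

lemma lincomb_sector_trace_local:
  fixes A :: op
  assumes W: "three_body_functional n W" and S: "S \<subseteq> {..<n}" "card S \<le> 2"
    and A: "acts_only_on n S A"
  shows "lincomb W (\<lambda>m. \<Sum>x\<in>sector n m. A x x) = 0"
proof -
  have "lincomb W (\<lambda>m. \<Sum>x\<in>sector n m. A x x)
      = lincomb W (\<lambda>m. \<Sum>s\<in>Pow S. A (set_encode s) (set_encode s) * of_nat (ext_count n (card S) (card s) m))"
  proof (intro arg_cong[where f="lincomb W"] ext sum_sector_local[OF S(1)])
    fix x x' assume "x < dimq n" "x' < dimq n" "\<forall>j\<in>S. bit x j = bit x' j"
    then show "A x x = A x' x'" using A unfolding acts_only_on_def by blast
  qed
  also have "\<dots> = (\<Sum>s\<in>Pow S. A (set_encode s) (set_encode s) * of_real (lincomb W (\<lambda>m. real (ext_count n (card S) (card s) m))))"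
    by (simp only: lincomb_sum lincomb_mult_left lincomb_of_nat[where 'a=complex])
  also have "\<dots> = 0"
  proof (intro sum.neutral ballI)
    fix s assume "s \<in> Pow S"
    then have "card s \<le> card S" using S by (meson PowD card_mono finite_subset finite_lessThan)
    then show "A (set_encode s) (set_encode s) * of_real (lincomb W (\<lambda>m. real (ext_count n (card S) (card s) m))) = 0"
      using W S(2) unfolding three_body_functional_def by simp
  qed
  finally show ?thesis .
qed

definition zsign :: "nat \<Rightarrow> nat \<Rightarrow> complex" where
  "zsign j x = (if bit x j then -1 else 1)"

lemma sum_sector_zsign_triple:
  assumes ijk: "i < j" "j < k" "k < n"
  shows "(\<Sum>x\<in>sector n m. zsign i x * zsign j x * zsign k x)
       = of_real (\<Sum>l\<le>3. (-1) ^ l * real (3 choose l) * real (ext_count n 3 l m))"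
proof -
  let ?S = "{i, j, k}"
  have S: "?S \<subseteq> {..<n}" and cS: "card ?S = 3" using ijk by auto
  have "(\<Sum>x\<in>sector n m. zsign i x * zsign j x * zsign k x) = (\<Sum>x\<in>sector n m. \<Prod>q\<in>?S. zsign q x)"
    using ijk by (simp add: mult.assoc)
  also have "\<dots> = (\<Sum>s\<in>Pow ?S. (\<Prod>q\<in>?S. zsign q (set_encode s)) * of_nat (ext_count n 3 (card s) m))"
    unfolding cS[symmetric]
  proof (rule sum_sector_local[OF S])
    fix x x' :: nat assume "\<forall>q\<in>?S. bit x q = bit x' q"
    then show "(\<Prod>q\<in>?S. zsign q x) = (\<Prod>q\<in>?S. zsign q x')"
      by (intro prod.cong refl) (auto simp: zsign_def)
  qed
  also have "\<dots> = (\<Sum>s\<in>Pow ?S. (-1) ^ card s * of_nat (ext_count n 3 (card s) m))"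
  proof (intro sum.cong refl arg_cong2[where f = "(*)"])
    fix s assume s: "s \<in> Pow ?S"
    then have "finite s" using finite_subset by blast
    then have "(\<Prod>q\<in>?S. zsign q (set_encode s)) = (\<Prod>q\<in>?S. if q \<in> s then -1 else 1)"
      by (intro prod.cong refl) (simp add: zsign_def bit_iff_in_set_decode)
    also have "\<dots> = (\<Prod>q\<in>?S \<inter> s. -1)"
      by (subst prod.inter_restrict[symmetric]) auto
    also have "?S \<inter> s = s" using s by auto
    finally show "(\<Prod>q\<in>?S. zsign q (set_encode s)) = (-1) ^ card s" by simp
  qed
  also have "\<dots> = (\<Sum>l\<le>3. of_nat (3 choose l) * ((-1) ^ l * of_nat (ext_count n 3 l m)))"
    using sum_Pow_by_card[of ?S "\<lambda>l. (-1) ^ l * of_nat (ext_count n 3 l m) :: complex"] cS by simp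
  finally show ?thesis by (simp add: mult_ac)
qed

lemma op_mult_diagonal_left:
  assumes "x < dimq n" and "\<And>y. y \<noteq> x \<Longrightarrow> D x y = 0"
  shows "op_mult n D B x y = D x x * B x y"
  unfolding op_mult_def using assms by (subst sum.remove[of _ x]) (auto intro!: sum.neutral)

lemma op_mult_diagonal_right:
  assumes "y < dimq n" and "\<And>x. x \<noteq> y \<Longrightarrow> D x y = 0"
  shows "op_mult n B D x y = B x y * D y y"
  unfolding op_mult_def using assms by (subst sum.remove[of _ y]) (auto intro!: sum.neutral)

lemma pauliZ_apply: "pauliZ j x y = (if x = y then zsign j x else 0)"
  by (simp add: pauliZ_def zsign_def)

lemma sum_zsign: "(\<Sum>j<n. zsign j x) = of_nat n - 2 * of_nat (weight n x)"
proof -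
  let ?A = "{j. j < n \<and> bit x j}" and ?B = "{j. j < n \<and> \<not> bit x j}"
  have split: "{..<n} = ?A \<union> ?B" "?A \<inter> ?B = {}" by auto
  then have "(\<Sum>j<n. zsign j x) = of_nat (card ?B) - of_nat (card ?A)"
    by (simp add: sum.union_disjoint zsign_def)
  moreover have "card ?A + card ?B = n"
    using split by (metis card_Un_disjoint card_lessThan finite_Un finite_lessThan)
  then have "(of_nat n :: complex) = of_nat (card ?A) + of_nat (card ?B)"
    by (metis of_nat_add)
  ultimately show ?thesis unfolding weight_def by (simp add: algebra_simps)
qed

lemma totalZ_apply: "totalZ n x y = (if x = y then of_nat n - 2 * of_nat (weight n x) else 0)"
  by (simp add: totalZ_def pauliZ_apply sum_zsign[symmetric])

lemma u1_invariant_block_diagonal: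
  assumes "u1_invariant n H" "x < dimq n" "y < dimq n" "weight n x \<noteq> weight n y"
  shows "H x y = 0"
proof -
  have "H x y * (of_nat n - 2 * of_nat (weight n y)) = (of_nat n - 2 * of_nat (weight n x)) * H x y"
    using assms unfolding u1_invariant_def
    by (metis (no_types, lifting) op_mult_diagonal_left op_mult_diagonal_right totalZ_apply)
  then have "H x y * (2 * of_nat (weight n x) - 2 * of_nat (weight n y)) = 0"
    by (simp add: algebra_simps)
  then show ?thesis using assms(4) by simp
qed

definition triples :: "nat \<Rightarrow> (nat \<times> nat \<times> nat) set" where
  "triples n = {(i, j, k). i < j \<and> j < k \<and> k < n}"

lemma finite_triples: "finite (triples n)"
  by (rule finite_subset[of _ "{..<n} \<times> {..<n} \<times> {..<n}"]) (auto simp: triples_def)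

lemma H3_apply:
  assumes "x < dimq n"
  shows "H3 n H2 a t x y = H2 t x y + (if x = y then
     (\<Sum>(i, j, k)\<in>triples n. of_real (a i j k t) * (zsign i x * zsign j x * zsign k x)) else 0)"
  using assms unfolding H3_def triples_def
  by (auto simp: op_mult_diagonal_left pauliZ_apply mult_ac intro!: sum.neutral)

lemma lincomb_sector_trace_H3:
  assumes W: "three_body_functional n W" and H2: "two_local n (H2 t)"
  shows "lincomb W (\<lambda>m. \<Sum>x\<in>sector n m. H3 n H2 a t x x) = 8 * of_real (\<Sum>(i, j, k)\<in>triples n. a i j k t)"
proof -
  obtain A where A: "\<And>S. acts_only_on n S (A S)"
    and H: "\<And>x y. x < dimq n \<Longrightarrow> y < dimq n \<Longrightarrow> H2 t x y = (\<Sum>S\<in>{S. S \<subseteq> {..<n} \<and> card S \<le> 2}. A S x y)"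
    using H2 unfolding two_local_def by blast
  let ?SS = "{S. S \<subseteq> {..<n} \<and> card S \<le> 2}"
  define z where "z m = (\<Sum>l\<le>3. (-1) ^ l * real (3 choose l) * real (ext_count n 3 l m))" for m
  have "(\<Sum>x\<in>sector n m. H3 n H2 a t x x) = (\<Sum>S\<in>?SS. \<Sum>x\<in>sector n m. A S x x)
      + (\<Sum>(i, j, k)\<in>triples n. of_real (a i j k t) * of_real (z m))" for m
  proof -
    have "x \<in> sector n m \<Longrightarrow> x < dimq n" for x by (simp add: sector_def)
    then have "(\<Sum>x\<in>sector n m. H3 n H2 a t x x) = (\<Sum>S\<in>?SS. \<Sum>x\<in>sector n m. A S x x)
      + (\<Sum>(i, j, k)\<in>triples n. of_real (a i j k t) * (\<Sum>x\<in>sector n m. zsign i x * zsign j x * zsign k x))"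
      by (simp add: H3_apply H sum.distrib sum.swap[of _ "sector n m"] sum_distrib_left split_beta)
    also have "\<dots> = (\<Sum>S\<in>?SS. \<Sum>x\<in>sector n m. A S x x)
      + (\<Sum>(i, j, k)\<in>triples n. of_real (a i j k t) * of_real (z m))"
      by (intro arg_cong2[where f = "(+)"] refl sum.cong) (auto simp: triples_def sum_sector_zsign_triple z_def)
    finally show ?thesis .
  qed
  then have "lincomb W (\<lambda>m. \<Sum>x\<in>sector n m. H3 n H2 a t x x)
      = (\<Sum>S\<in>?SS. lincomb W (\<lambda>m. \<Sum>x\<in>sector n m. A S x x))
      + (\<Sum>(i, j, k)\<in>triples n. of_real (a i j k t) * of_real (lincomb W z))"
    by (simp add: lincomb_add lincomb_sum lincomb_mult_left lincomb_of_real split_beta)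
  also have "\<dots> = 8 * of_real (\<Sum>(i, j, k)\<in>triples n. a i j k t)"
  proof -
    have "lincomb W z = 8" using W unfolding three_body_functional_def z_def by simp
    moreover have "lincomb W (\<lambda>m. \<Sum>x\<in>sector n m. A S x x) = 0" if "S \<in> ?SS" for S
      using that A lincomb_sector_trace_local[OF W] by blast
    ultimately show ?thesis by (simp add: sum_distrib_left split_beta mult.commute)
  qed
  finally show ?thesis .
qed

section \<open>Determinants over a set of basis states\<close>

lemma det_on_cong:
  assumes "\<And>i j. i \<in> B \<Longrightarrow> j \<in> B \<Longrightarrow> M i j = M' i j"
  shows "det_on B M = det_on B M'"
  unfolding det_on_def
proof (intro sum.cong refl arg_cong2[where f = "(*)"] prod.cong)
  fix p i assume "p \<in> {p. p permutes B}" "i \<in> B"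
  then show "M i (p i) = M' i (p i)" using assms by (simp add: permutes_in_image)
qed

lemma det_on_op_id:
  assumes "finite B"
  shows "det_on B op_id = 1"
proof -
  have "(\<Prod>j\<in>B. op_id j (p j)) = 0" if "p permutes B" "p \<noteq> id" for p
  proof -
    obtain j where "p j \<noteq> j" using \<open>p \<noteq> id\<close> by (metis eq_id_iff)
    then have "j \<in> B" using that(1) by (meson permutes_not_in)
    then show ?thesis using assms \<open>p j \<noteq> j\<close> by (intro prod_zero bexI[of _ j]) (auto simp: op_id_def)
  qed
  then have "det_on B op_id = (\<Sum>p\<in>{p. p permutes B}. if p = id then 1 else 0)"
    unfolding det_on_def by (intro sum.cong refl) (auto simp: op_id_def)
  also have "\<dots> = 1" using assms by (simp add: finite_permutations permutes_id)
  finally show ?thesis .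
qed

lemma det_on_eq_0_if_rows_eq:
  assumes B: "finite B" and il: "i \<in> B" "l \<in> B" "i \<noteq> l" and M: "M i = M l"
  shows "det_on B M = 0"
proof -
  let ?t = "Transposition.transpose i l"
  let ?P = "{p. p permutes B}"
  let ?F = "\<lambda>p. of_int (sign p) * (\<Prod>j\<in>B. M j (p j)) :: complex"
  have tp: "?t permutes B" using il by (simp add: permutes_swap_id)
  have F: "?F (p \<circ> ?t) = - ?F p" if p: "p permutes B" for p
  proof -
    have "sign (p \<circ> ?t) = sign p * sign ?t"
      using p tp B by (intro sign_compose) (auto simp: permutation_permutes)
    then have sign: "sign (p \<circ> ?t) = - sign p" using il by (simp add: sign_swap_id)
    have "M (?t j) = M j" for j
      using M by (cases "j = i"; cases "j = l") (auto simp: transpose_def)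
    then have "(\<Prod>j\<in>B. M j ((p \<circ> ?t) j)) = (\<Prod>j\<in>B. M (?t j) ((p \<circ> ?t) j))"
      by simp
    also have "\<dots> = (\<Prod>j\<in>B. M j (p j))"
      using prod.reindex_bij_betw[OF permutes_imp_bij[OF tp], of "\<lambda>j. M j (p j)"] by simp
    finally show ?thesis using sign by simp
  qed
  have "det_on B M = sum (\<lambda>p. ?F (p \<circ> ?t)) ?P"
    unfolding det_on_def
    by (rule sum.reindex_bij_witness[of _ "\<lambda>p. p \<circ> ?t" "\<lambda>p. p \<circ> ?t"])
      (use tp in \<open>auto simp: o_assoc[symmetric] permutes_compose\<close>)
  also have "\<dots> = sum (\<lambda>p. - ?F p) ?P"
    using F by (intro sum.cong) auto
  also have "\<dots> = - det_on B M"
    unfolding det_on_def by (simp add: sum_negf)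
  finally show ?thesis by simp
qed

text \<open>Cofactor expansion along row i of the matrix with row i replaced by row l.\<close>

lemma det_on_replace_row:
  assumes B: "finite B" and i: "i \<in> B" and l: "l \<in> B"
  shows "(\<Sum>p | p permutes B. of_int (sign p) * (W l (p i) * (\<Prod>j\<in>B - {i}. W j (p j))))
       = (if l = i then det_on B W else 0)"
proof -
  let ?M = "\<lambda>j. if j = i then W l else W j"
  have "(\<Sum>p | p permutes B. of_int (sign p) * (W l (p i) * (\<Prod>j\<in>B - {i}. W j (p j)))) = det_on B ?M"
    unfolding det_on_def
  proof (intro sum.cong refl arg_cong2[where f = "(*)"])
    fix p
    have "(\<Prod>j\<in>B. ?M j (p j)) = ?M i (p i) * (\<Prod>j\<in>B - {i}. ?M j (p j))"
      using B i by (simp add: prod.remove)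
    also have "(\<Prod>j\<in>B - {i}. ?M j (p j)) = (\<Prod>j\<in>B - {i}. W j (p j))"
      by (intro prod.cong) auto
    finally show "W l (p i) * (\<Prod>j\<in>B - {i}. W j (p j)) = (\<Prod>j\<in>B. ?M j (p j))" by simp
  qed
  also have "\<dots> = (if l = i then det_on B W else 0)"
  proof (cases "l = i")
    case True
    then have "?M = W" by auto
    then show ?thesis using True by simp
  qed (use det_on_eq_0_if_rows_eq[OF B i l, of ?M] in auto)
  finally show ?thesis .
qed

lemma det_on_has_vector_derivative:
  fixes V :: "real \<Rightarrow> op" and H :: op
  assumes B: "finite B"
    and V': "\<And>i k. i \<in> B \<Longrightarrow> k \<in> B \<Longrightarrow>
              ((\<lambda>s. V s i k) has_vector_derivative (\<Sum>l\<in>B. H i l * V t l k)) (at t within S)"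
  shows "((\<lambda>s. det_on B (V s)) has_vector_derivative (\<Sum>i\<in>B. H i i) * det_on B (V t)) (at t within S)"
proof -
  let ?P = "{p. p permutes B}"
  let ?D = "\<lambda>p i. of_int (sign p) * ((\<Sum>l\<in>B. H i l * V t l (p i)) * (\<Prod>j\<in>B - {i}. V t j (p j)))"
  have "((\<lambda>s. det_on B (V s)) has_derivative (\<lambda>h. h *\<^sub>R (\<Sum>p\<in>?P. \<Sum>i\<in>B. ?D p i))) (at t within S)"
    unfolding det_on_def
  proof (rule has_derivative_eq_rhs)
    show "((\<lambda>s. \<Sum>p\<in>?P. of_int (sign p) * (\<Prod>i\<in>B. V s i (p i))) has_derivative
       (\<lambda>h. \<Sum>p\<in>?P. of_int (sign p) * (\<Sum>i\<in>B. (h *\<^sub>R (\<Sum>l\<in>B. H i l * V t l (p i))) * (\<Prod>j\<in>B - {i}. V t j (p j)))))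
       (at t within S)"
    proof (intro has_derivative_sum has_derivative_mult_right has_derivative_prod)
      fix p i assume "p \<in> ?P" "i \<in> B"
      then show "((\<lambda>s. V s i (p i)) has_derivative (\<lambda>h. h *\<^sub>R (\<Sum>l\<in>B. H i l * V t l (p i)))) (at t within S)"
        using V' by (simp add: permutes_in_image has_vector_derivative_def)
    qed
  qed (auto simp: fun_eq_iff sum_distrib_left sum_distrib_right mult_ac scaleR_conv_of_real)
  moreover have "(\<Sum>p\<in>?P. \<Sum>i\<in>B. ?D p i) = (\<Sum>i\<in>B. \<Sum>l\<in>B. H i l *
      (\<Sum>p\<in>?P. of_int (sign p) * (V t l (p i) * (\<Prod>j\<in>B - {i}. V t j (p j)))))"
    by (simp add: sum.swap[of _ ?P] sum_distrib_left sum_distrib_right mult_ac)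
  moreover have "\<dots> = (\<Sum>i\<in>B. H i i) * det_on B (V t)"
  proof -
    have "(\<Sum>l\<in>B. H i l * (if l = i then d else 0)) = H i i * d" if "i \<in> B" for i d
      using B that by (simp add: if_distrib[of "(*) _"] cong: if_cong)
    then show ?thesis using B by (simp add: det_on_replace_row sum_distrib_right cong: sum.cong)
  qed
  ultimately show ?thesis unfolding has_vector_derivative_def by simp
qed

section \<open>Piecewise continuity, Liouville's formula and the time-ordered exponential\<close>

lemma piecewise_continuous_on_locally_bounded:
  fixes f :: "real \<Rightarrow> 'b::real_normed_vector"
  assumes cont: "continuous_on ({a..b} - D) f"
    and lim: "\<forall>x\<in>D. (\<exists>l. (f \<longlongrightarrow> l) (at x within {a..<x})) \<and> (\<exists>l. (f \<longlongrightarrow> l) (at x within {x<..b}))"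
    and x: "x \<in> {a..b}"
  shows "\<exists>d>0. \<exists>K. \<forall>y\<in>{a..b} - D. dist y x < d \<longrightarrow> norm (f y) \<le> K"
proof (cases "x \<in> D")
  case False
  with x cont obtain d where d: "d > 0" "\<forall>y\<in>{a..b} - D. dist y x < d \<longrightarrow> dist (f y) (f x) < 1"
    unfolding continuous_on_iff by (metis DiffI zero_less_one)
  then have "\<forall>y\<in>{a..b} - D. dist y x < d \<longrightarrow> norm (f y) \<le> norm (f x) + 1"
    by (smt (verit) dist_norm norm_triangle_sub)
  then show ?thesis using d(1) by blast
next
  case True
  with lim obtain l1 l2 where "(f \<longlongrightarrow> l1) (at x within {a..<x})" "(f \<longlongrightarrow> l2) (at x within {x<..b})"
    by blast
  then obtain d1 d2 where d1: "d1 > 0" "\<forall>y\<in>{a..<x}. y \<noteq> x \<and> dist y x < d1 \<longrightarrow> dist (f y) l1 < 1"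
    and d2: "d2 > 0" "\<forall>y\<in>{x<..b}. y \<noteq> x \<and> dist y x < d2 \<longrightarrow> dist (f y) l2 < 1"
    unfolding tendsto_iff eventually_at by (metis zero_less_one)
  have "norm (f y) \<le> max (norm l1) (norm l2) + 1" if y: "y \<in> {a..b} - D" "dist y x < min d1 d2" for y
  proof -
    have "y \<noteq> x" using y True by auto
    then have "y < x \<or> x < y" by linarith
    then have "dist (f y) l1 < 1 \<or> dist (f y) l2 < 1" using d1(2) d2(2) y by auto
    then show ?thesis by (smt (verit) dist_norm norm_triangle_sub)
  qed
  then show ?thesis using d1(1) d2(1) by (metis min_less_iff_conj)
qed

lemma compact_locally_bounded_imp_bounded:
  fixes f :: "'a::metric_space \<Rightarrow> 'b::real_normed_vector"
  assumes "compact K" "S \<subseteq> K"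
    and loc: "\<And>x. x \<in> K \<Longrightarrow> \<exists>d>0. \<exists>B. \<forall>y\<in>S. dist y x < d \<longrightarrow> norm (f y) \<le> B"
  shows "\<exists>B. \<forall>y\<in>S. norm (f y) \<le> B"
proof -
  obtain d B where dB: "\<And>x. x \<in> K \<Longrightarrow> d x > 0 \<and> (\<forall>y\<in>S. dist y x < d x \<longrightarrow> norm (f y) \<le> B x)"
    using loc by metis
  obtain C where C: "C \<subseteq> K" "finite C" "K \<subseteq> (\<Union>x\<in>C. ball x (d x))"
    by (rule compactE_image[OF \<open>compact K\<close>, of K "\<lambda>x. ball x (d x)"]) (use dB in force)+
  have "norm (f y) \<le> (\<Sum>x\<in>C. \<bar>B x\<bar>)" if "y \<in> S" for y
  proof -
    obtain x where x: "x \<in> C" "y \<in> ball x (d x)" using C \<open>S \<subseteq> K\<close> \<open>y \<in> S\<close> by blast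
    then have "norm (f y) \<le> \<bar>B x\<bar>" using dB[of x] C \<open>y \<in> S\<close> by (force simp: dist_commute)
    also have "\<dots> \<le> (\<Sum>x\<in>C. \<bar>B x\<bar>)" using x C by (intro member_le_sum) auto
    finally show ?thesis .
  qed
  then show ?thesis by blast
qed

lemma piecewise_continuous_on_integrable:
  fixes f :: "real \<Rightarrow> 'b::euclidean_space"
  assumes "piecewise_continuous_on a b f"
  shows "f integrable_on {a..b}"
proof -
  obtain D where D: "finite D" "continuous_on ({a..b} - D) f"
    "\<forall>x\<in>D. (\<exists>l. (f \<longlongrightarrow> l) (at x within {a..<x})) \<and> (\<exists>l. (f \<longlongrightarrow> l) (at x within {x<..b}))"
    using assms unfolding piecewise_continuous_on_def by blast
  obtain B where B: "\<forall>y\<in>{a..b} - D. norm (f y) \<le> B"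
    using compact_locally_bounded_imp_bounded[of "{a..b}" "{a..b} - D" f]
      piecewise_continuous_on_locally_bounded[OF D(2,3)] by auto
  have negl: "negligible D" using D(1) by (rule negligible_finite)
  have S: "{a..b} - D \<in> sets lebesgue"
    using negl by (intro sets.Diff) (auto intro: negligible_imp_sets)
  have "f integrable_on ({a..b} - D)"
  proof (rule measurable_bounded_by_integrable_imp_integrable[OF _ _ _ S])
    show "f \<in> borel_measurable (lebesgue_on ({a..b} - D))"
      by (rule continuous_imp_measurable_on_sets_lebesgue[OF D(2) S])
    show "(\<lambda>x. B) integrable_on ({a..b} - D)"
      by (rule integrable_spike_set[of _ "{a..b}"]) (auto intro: negligible_subset[OF negl])
  qed (use B in blast)
  then show ?thesis
    by (rule integrable_spike_set) (auto intro: negligible_subset[OF negl])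
qed

lemma piecewise_continuous_on_common_exceptions:
  fixes f :: "'i \<Rightarrow> real \<Rightarrow> 'b::real_normed_vector"
  assumes "finite I" "\<And>i. i \<in> I \<Longrightarrow> piecewise_continuous_on a b (f i)"
  shows "\<exists>D. finite D \<and> (\<forall>i\<in>I. continuous_on ({a..b} - D) (f i))"
  using assms
proof (induction I rule: finite_induct)
  case (insert i I)
  obtain D where D: "finite D" "\<forall>j\<in>I. continuous_on ({a..b} - D) (f j)"
    using insert by blast
  obtain Di where Di: "finite Di" "continuous_on ({a..b} - Di) (f i)"
    using insert.prems[of i] unfolding piecewise_continuous_on_def by blast
  have "\<forall>j\<in>insert i I. continuous_on ({a..b} - (D \<union> Di)) (f j)"
    using D Di by (auto intro: continuous_on_subset)
  then show ?case using D Di by blast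
qed auto

lemma integral_has_vector_derivative_at_continuity_point:
  fixes f :: "real \<Rightarrow> 'b::banach"
  assumes f: "f integrable_on {a..b}" and t: "t \<in> {a<..<b}" and c: "isCont f t"
  shows "((\<lambda>u. integral {a..u} f) has_vector_derivative f t) (at t)"
proof -
  have "t \<in> {a..b} - {}" using t by auto
  then have "((\<lambda>u. integral {a..u} f) has_vector_derivative f t) (at t within {a..b} - {})"
    by (rule integral_has_vector_derivative_continuous_at[OF f _ finite.emptyI])
      (rule continuous_at_imp_continuous_at_within[OF c])
  moreover have "t \<in> interior {a..b}" using t by simp
  ultimately show ?thesis by (metis Diff_empty at_within_interior)
qed

text \<open>Liouville's formula: det V(s) * exp(\<i> * integral {0..s} \<tau>) has derivative zero off D.\<close>

lemma det_on_liouville: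
  fixes V H :: "real \<Rightarrow> op" and \<tau> :: "real \<Rightarrow> real"
  assumes B: "finite B" and D: "finite D" and T: "0 \<le> T"
    and V_cont: "\<And>i k. i \<in> B \<Longrightarrow> k \<in> B \<Longrightarrow> continuous_on {0..T} (\<lambda>s. V s i k)"
    and V0: "det_on B (V 0) = 1"
    and V': "\<And>t i k. t \<in> {0<..<T} - D \<Longrightarrow> i \<in> B \<Longrightarrow> k \<in> B \<Longrightarrow>
              ((\<lambda>s. V s i k) has_vector_derivative (\<Sum>l\<in>B. H t i l * V t l k)) (at t)"
    and trace: "\<And>t. t \<in> {0<..<T} - D \<Longrightarrow> (\<Sum>i\<in>B. H t i i) = - \<i> * of_real (\<tau> t)"
    and \<tau>_int: "\<tau> integrable_on {0..T}"
    and \<tau>_cont: "\<And>t. t \<in> {0<..<T} - D \<Longrightarrow> isCont \<tau> t"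
  shows "det_on B (V T) = exp (- \<i> * of_real (integral {0..T} \<tau>))"
proof -
  define E where "E s = exp (\<i> * of_real (integral {0..s} \<tau>))" for s
  define \<psi> where "\<psi> s = det_on B (V s) * E s" for s
  have \<psi>': "(\<psi> has_vector_derivative 0) (at t)" if t: "t \<in> {0<..<T} - D" for t
  proof -
    have G': "((\<lambda>s. integral {0..s} \<tau>) has_real_derivative \<tau> t) (at t)"
      using integral_has_vector_derivative_at_continuity_point[OF \<tau>_int _ \<tau>_cont] t
      by (simp add: has_real_derivative_iff_has_vector_derivative)
    have exp': "((\<lambda>z. exp (\<i> * z)) has_field_derivative \<i> * exp (\<i> * w)) (at w)" for w :: complex
      by (auto intro!: derivative_eq_intros)
    have "(E has_vector_derivative of_real (\<tau> t) * (\<i> * E t)) (at t)"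
      unfolding E_def using field_vector_diff_chain_at[OF has_vector_derivative_of_real[OF G'] exp']
      by (simp add: o_def)
    moreover have "((\<lambda>s. det_on B (V s)) has_vector_derivative - \<i> * of_real (\<tau> t) * det_on B (V t)) (at t)"
      using det_on_has_vector_derivative[OF B V'[OF t]] trace[OF t] by simp
    ultimately have "(\<psi> has_vector_derivative
        det_on B (V t) * (of_real (\<tau> t) * (\<i> * E t)) + - \<i> * of_real (\<tau> t) * det_on B (V t) * E t) (at t)"
      unfolding \<psi>_def by (rule has_vector_derivative_mult[rotated])
    then show ?thesis by (simp add: algebra_simps)
  qed
  have "continuous_on {0..T} (\<lambda>s. det_on B (V s))"
    unfolding det_on_def using V_cont
    by (intro continuous_intros) (auto simp: permutes_in_image)
  moreover have "continuous_on {0..T} E"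
    unfolding E_def by (intro continuous_intros indefinite_integral_continuous_1 \<tau>_int)
  ultimately have \<psi>_cont: "continuous_on {0..T} \<psi>"
    unfolding \<psi>_def by (intro continuous_intros)
  have "\<psi> T = \<psi> 0"
  proof (rule has_derivative_zero_unique_strong_interval[of "D \<union> {0, T}" 0 T])
    fix t assume "t \<in> {0..T} - (D \<union> {0, T})"
    then have "(\<psi> has_vector_derivative 0) (at t)" by (intro \<psi>') auto
    then show "(\<psi> has_derivative (\<lambda>h. 0)) (at t within {0..T})"
      by (simp add: has_vector_derivative_def has_derivative_at_withinI)
  qed (use D T \<psi>_cont in auto)
  then have "det_on B (V T) * E T = 1"
    unfolding \<psi>_def E_def using V0 by simp
  then show ?thesis
    unfolding E_def by (simp add: exp_minus field_simps)
qed

lemma time_ordered_exp_continuous: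
  "time_ordered_exp n T H V \<Longrightarrow> x < dimq n \<Longrightarrow> y < dimq n \<Longrightarrow> continuous_on {0..T} (\<lambda>t. V t x y)"
  unfolding time_ordered_exp_def by blast

lemma time_ordered_exp_eq_integral:
  assumes "time_ordered_exp n T H V" "t \<in> {0..T}" "x < dimq n" "y < dimq n"
  shows "(\<lambda>s. op_mult n (H s) (V s) x y) integrable_on {0..t}"
    and "V t x y = op_id x y - \<i> * integral {0..t} (\<lambda>s. op_mult n (H s) (V s) x y)"
proof -
  obtain I where I: "((\<lambda>s. op_mult n (H s) (V s) x y) has_integral I) {0..t}"
    "V t x y = op_id x y - \<i> * I"
    using assms unfolding time_ordered_exp_def by blast
  then show "(\<lambda>s. op_mult n (H s) (V s) x y) integrable_on {0..t}" by blast
  show "V t x y = op_id x y - \<i> * integral {0..t} (\<lambda>s. op_mult n (H s) (V s) x y)"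
    using I by (simp add: integral_unique)
qed

lemma time_ordered_exp_at_0:
  "time_ordered_exp n T H V \<Longrightarrow> 0 \<le> T \<Longrightarrow> x < dimq n \<Longrightarrow> y < dimq n \<Longrightarrow> V 0 x y = op_id x y"
  using time_ordered_exp_eq_integral(2)[of n T H V 0 x y] by simp

lemma time_ordered_exp_has_vector_derivative:
  assumes V: "time_ordered_exp n T H V" and t: "t \<in> {0<..<T}"
    and H_cont: "\<And>x y. x < dimq n \<Longrightarrow> y < dimq n \<Longrightarrow> isCont (\<lambda>s. H s x y) t"
    and xy: "x < dimq n" "y < dimq n"
  shows "((\<lambda>s. V s x y) has_vector_derivative - \<i> * op_mult n (H t) (V t) x y) (at t)"
proof -
  let ?f = "\<lambda>s. op_mult n (H s) (V s) x y"
  have "isCont (\<lambda>s. V s l y) t" if "l < dimq n" for l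
    using time_ordered_exp_continuous[OF V that xy(2)] t
    by (simp add: continuous_on_interior)
  then have "isCont ?f t"
    unfolding op_mult_def using H_cont xy by (intro continuous_intros) auto
  then have "((\<lambda>u. integral {0..u} ?f) has_vector_derivative ?f t) (at t)"
    using time_ordered_exp_eq_integral(1)[OF V _ xy, of T] t
    by (intro integral_has_vector_derivative_at_continuity_point) auto
  then have "((\<lambda>u. op_id x y - \<i> * integral {0..u} ?f) has_vector_derivative - \<i> * ?f t) (at t)"
    by (auto intro!: derivative_eq_intros)
  then show ?thesis
    by (rule has_vector_derivative_transform_within_open[OF _ open_greaterThanLessThan t])
      (use time_ordered_exp_eq_integral(2)[OF V _ xy] in auto)
qed

section \<open>Sector determinants of the time-ordered exponential\<close>

lemma H3_block_diagonal:
  assumes "u1_invariant n (H2 t)" "x < dimq n" "y < dimq n" "weight n x \<noteq> weight n y"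
  shows "H3 n H2 a t x y = 0"
  using assms u1_invariant_block_diagonal[OF assms] by (auto simp: H3_apply)

lemma op_mult_block_diagonal:
  assumes "i \<in> sector n m" and "\<And>l. l < dimq n \<Longrightarrow> weight n l \<noteq> m \<Longrightarrow> H i l = 0"
  shows "op_mult n H W i k = (\<Sum>l\<in>sector n m. H i l * W l k)"
  unfolding op_mult_def using assms
  by (intro sum.mono_neutral_right) (auto simp: sector_def)

lemma Im_H3_diagonal:
  assumes "hermitian_op n (H2 t)" "x < dimq n"
  shows "Im (H3 n H2 a t x x) = 0"
proof -
  have "H2 t x x = cnj (H2 t x x)" using assms unfolding hermitian_op_def by blast
  then have "Im (H2 t x x) = 0" by (metis Reals_cnj_iff complex_is_Real_iff)
  moreover have "Im (zsign j x) = 0" for j by (simp add: zsign_def)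
  ultimately show ?thesis using assms by (simp add: H3_apply Im_sum split_beta)
qed

lemma H3_diagonal_integrable:
  assumes "x < dimq n"
    and "piecewise_continuous_on 0 T (\<lambda>t. H2 t x x)"
    and "\<And>i j k. i < j \<Longrightarrow> j < k \<Longrightarrow> k < n \<Longrightarrow> piecewise_continuous_on 0 T (a i j k)"
  shows "(\<lambda>t. H3 n H2 a t x x) integrable_on {0..T}"
proof -
  have "(\<lambda>t. of_real (a (fst q) (fst (snd q)) (snd (snd q)) t) * c) integrable_on {0..T}"
    if "q \<in> triples n" for q and c :: complex
  proof (rule integrable_on_mult_left)
    have "a (fst q) (fst (snd q)) (snd (snd q)) integrable_on {0..T}"
      using that assms(3) by (intro piecewise_continuous_on_integrable) (auto simp: triples_def)
    then show "(\<lambda>t. of_real (a (fst q) (fst (snd q)) (snd (snd q)) t) :: complex) integrable_on {0..T}"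
      using integrable_linear[OF _ bounded_linear_of_real] by (simp add: o_def)
  qed
  moreover have "(\<lambda>t. H2 t x x) integrable_on {0..T}"
    using assms(2) by (rule piecewise_continuous_on_integrable)
  ultimately have "(\<lambda>t. H2 t x x + (\<Sum>q\<in>triples n. of_real (a (fst q) (fst (snd q)) (snd (snd q)) t)
      * (zsign (fst q) x * zsign (fst (snd q)) x * zsign (snd (snd q)) x))) integrable_on {0..T}"
    by (intro integrable_add integrable_sum finite_triples) auto
  then show ?thesis using assms(1) by (simp add: H3_apply split_beta)
qed

lemma H3_continuous_off_finite:
  assumes "\<And>x y. x < dimq n \<Longrightarrow> y < dimq n \<Longrightarrow> piecewise_continuous_on 0 T (\<lambda>t. H2 t x y)"
    and "\<And>i j k. i < j \<Longrightarrow> j < k \<Longrightarrow> k < n \<Longrightarrow> piecewise_continuous_on 0 T (a i j k)"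
  obtains D where "finite D"
    "\<And>t x y. t \<in> {0<..<T} - D \<Longrightarrow> x < dimq n \<Longrightarrow> y < dimq n \<Longrightarrow> isCont (\<lambda>s. H3 n H2 a s x y) t"
proof -
  obtain D1 where D1: "finite D1"
    "\<forall>(x, y)\<in>{..<dimq n} \<times> {..<dimq n}. continuous_on ({0..T} - D1) (\<lambda>t. H2 t x y)"
    using piecewise_continuous_on_common_exceptions[of "{..<dimq n} \<times> {..<dimq n}" 0 T
        "\<lambda>(x, y) t. H2 t x y"] assms(1) by (auto simp: split_beta)
  obtain D2 where D2: "finite D2" "\<forall>(i, j, k)\<in>triples n. continuous_on ({0..T} - D2) (a i j k)"
    using piecewise_continuous_on_common_exceptions[OF finite_triples[of n],
        where a = 0 and b = T and f = "\<lambda>(i, j, k). a i j k"] assms(2)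
    by (auto simp: split_beta triples_def)
  have isCont_of: "isCont f t" if "continuous_on ({0..T} - D') f" "finite D'" "t \<in> {0<..<T} - D'"
    for f :: "real \<Rightarrow> 'b::topological_space" and D' t
  proof (rule continuous_on_interior[OF that(1)])
    have "open ({0<..<T} - D')" using that(2) by (intro open_Diff finite_imp_closed) auto
    then show "t \<in> interior ({0..T} - D')"
      using interior_maximal[of "{0<..<T} - D'" "{0..T} - D'"] that(3) by force
  qed
  have "isCont (\<lambda>s. H3 n H2 a s x y) t"
    if t: "t \<in> {0<..<T} - (D1 \<union> D2)" and xy: "x < dimq n" "y < dimq n" for t x y
  proof -
    have "isCont (\<lambda>s. H2 s x y) t" using D1 t xy by (intro isCont_of[of D1]) auto
    moreover have "isCont (a (fst q) (fst (snd q)) (snd (snd q))) t" if "q \<in> triples n" for q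
      using D2 t that by (intro isCont_of[of D2]) (auto simp: split_beta)
    ultimately show ?thesis
      using xy by (cases "x = y") (auto simp: H3_apply split_beta intro!: continuous_intros)
  qed
  then show ?thesis using D1(1) D2(1) that[of "D1 \<union> D2"] by blast
qed

lemma finite_sector: "finite (sector n m)"
  by (rule finite_subset[of _ "{..<dimq n}"]) (auto simp: sector_def)

lemma det_on_sector_H3:
  fixes H2 V :: "real \<Rightarrow> op" and m :: nat
  assumes T: "0 \<le> T"
    and herm: "\<And>t. t \<in> {0..T} \<Longrightarrow> hermitian_op n (H2 t)"
    and u1: "\<And>t. t \<in> {0..T} \<Longrightarrow> u1_invariant n (H2 t)"
    and pcH: "\<And>x y. x < dimq n \<Longrightarrow> y < dimq n \<Longrightarrow> piecewise_continuous_on 0 T (\<lambda>t. H2 t x y)"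
    and pca: "\<And>i j k. i < j \<Longrightarrow> j < k \<Longrightarrow> k < n \<Longrightarrow> piecewise_continuous_on 0 T (a i j k)"
    and V: "time_ordered_exp n T (H3 n H2 a) V"
  defines "\<tau> \<equiv> \<lambda>t. Re (\<Sum>x\<in>sector n m. H3 n H2 a t x x)"
  shows "\<tau> integrable_on {0..T}"
    and "det_on (sector n m) (V T) = exp (- \<i> * of_real (integral {0..T} \<tau>))"
proof -
  let ?B = "sector n m"
  have B: "x \<in> ?B \<Longrightarrow> x < dimq n" for x by (simp add: sector_def)
  obtain D where D: "finite D"
    and H3_cont: "\<And>t x y. t \<in> {0<..<T} - D \<Longrightarrow> x < dimq n \<Longrightarrow> y < dimq n \<Longrightarrow> isCont (\<lambda>s. H3 n H2 a s x y) t"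
    using H3_continuous_off_finite[of n T H2 a, OF pcH pca] by blast
  have "(\<lambda>t. \<Sum>x\<in>?B. H3 n H2 a t x x) integrable_on {0..T}" (is "?tr integrable_on _")
    using B pcH pca by (intro integrable_sum finite_sector H3_diagonal_integrable) auto
  then show \<tau>_int: "\<tau> integrable_on {0..T}"
    unfolding \<tau>_def using integrable_linear[OF _ bounded_linear_Re, of ?tr] by (simp only: o_def)
  show "det_on ?B (V T) = exp (- \<i> * of_real (integral {0..T} \<tau>))"
  proof (rule det_on_liouville[OF finite_sector D T _ _ _ _ \<tau>_int, where H = "\<lambda>t i l. - \<i> * H3 n H2 a t i l"])
    show "continuous_on {0..T} (\<lambda>s. V s i k)" if "i \<in> ?B" "k \<in> ?B" for i k
      using that B by (intro time_ordered_exp_continuous[OF V]) auto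
    have "det_on ?B (V 0) = det_on ?B op_id"
      using B T time_ordered_exp_at_0[OF V] by (intro det_on_cong) auto
    then show "det_on ?B (V 0) = 1" by (simp add: det_on_op_id finite_sector)
  next
    fix t i k assume t: "t \<in> {0<..<T} - D" and ik: "i \<in> ?B" "k \<in> ?B"
    have "op_mult n (H3 n H2 a t) (V t) i k = (\<Sum>l\<in>?B. H3 n H2 a t i l * V t l k)"
    proof (rule op_mult_block_diagonal[OF ik(1)])
      fix l assume "l < dimq n" "weight n l \<noteq> m"
      moreover have "u1_invariant n (H2 t)" using t u1 by simp
      ultimately show "H3 n H2 a t i l = 0"
        using ik(1) H3_block_diagonal[of n H2 t i l a] by (simp add: sector_def)
    qed
    moreover have "((\<lambda>s. V s i k) has_vector_derivative - \<i> * op_mult n (H3 n H2 a t) (V t) i k) (at t)"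
      using t ik B by (intro time_ordered_exp_has_vector_derivative[OF V] H3_cont) auto
    ultimately show "((\<lambda>s. V s i k) has_vector_derivative (\<Sum>l\<in>?B. - \<i> * H3 n H2 a t i l * V t l k)) (at t)"
      by (simp add: sum_distrib_left mult.assoc)
  next
    fix t assume t: "t \<in> {0<..<T} - D"
    have "Im (\<Sum>x\<in>?B. H3 n H2 a t x x) = 0"
      using t B herm by (simp add: Im_sum Im_H3_diagonal)
    then show "(\<Sum>i\<in>?B. - \<i> * H3 n H2 a t i i) = - \<i> * of_real (\<tau> t)"
      unfolding \<tau>_def by (simp add: complex_eq_iff sum_negf flip: sum_distrib_left)
    have "isCont (\<lambda>s. \<Sum>x\<in>?B. H3 n H2 a s x x) t"
      using t B H3_cont by (intro continuous_intros) auto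
    then show "isCont \<tau> t"
      unfolding \<tau>_def by (rule continuous_Re)
  qed
qed

lemma cong_2pi_theta:
  assumes "det_on (sector n m) W = exp (- \<i> * of_real g)"
  shows "cong_2pi (theta n W m) (- g)"
proof -
  obtain k :: int where "Im (- \<i> * of_real g) - of_int k * (2 * pi) = Arg (exp (- \<i> * of_real g))"
    using Arg_exp_diff_2pi by blast
  then have "theta n W m - (- g) = 2 * pi * of_int (- k)"
    unfolding theta_def assms by (simp add: algebra_simps)
  then show ?thesis unfolding cong_2pi_def by blast
qed

lemma lincomb_integral_sector_trace_H3:
  assumes W: "three_body_functional n W"
    and H2: "\<And>t. t \<in> {0..T} \<Longrightarrow> two_local n (H2 t)"
    and int: "\<And>m. (\<lambda>t. Re (\<Sum>x\<in>sector n m. H3 n H2 a t x x)) integrable_on {0..T}"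
  shows "lincomb W (\<lambda>m. integral {0..T} (\<lambda>t. Re (\<Sum>x\<in>sector n m. H3 n H2 a t x x)))
       = 8 * integral {0..T} (\<lambda>t. \<Sum>(i, j, k)\<in>triples n. a i j k t)"
proof -
  have "lincomb W (\<lambda>m. integral {0..T} (\<lambda>t. Re (\<Sum>x\<in>sector n m. H3 n H2 a t x x)))
      = integral {0..T} (\<lambda>t. lincomb W (\<lambda>m. Re (\<Sum>x\<in>sector n m. H3 n H2 a t x x)))"
    by (rule integral_unique[OF has_integral_lincomb[OF int], symmetric])
  also have "\<dots> = integral {0..T} (\<lambda>t. 8 * (\<Sum>(i, j, k)\<in>triples n. a i j k t))"
  proof (rule integral_cong)
    fix t assume "t \<in> {0..T}"
    then have "lincomb W (\<lambda>m. \<Sum>x\<in>sector n m. H3 n H2 a t x x) = 8 * of_real (\<Sum>(i, j, k)\<in>triples n. a i j k t)"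
      by (intro lincomb_sector_trace_H3 W H2)
    from arg_cong[where f = Re, OF this]
    show "lincomb W (\<lambda>m. Re (\<Sum>x\<in>sector n m. H3 n H2 a t x x)) = 8 * (\<Sum>(i, j, k)\<in>triples n. a i j k t)"
      by (simp add: Re_lincomb)
  qed
  finally show ?thesis by simp
qed

lemma cong_2pi_lincomb_theta:
  assumes W: "three_body_functional n W" "\<forall>(m, c) \<in> set W. c \<in> \<int>"
    and H2: "\<And>t. t \<in> {0..T} \<Longrightarrow> two_local n (H2 t)"
    and int: "\<And>m. (\<lambda>t. Re (\<Sum>x\<in>sector n m. H3 n H2 a t x x)) integrable_on {0..T}"
    and theta: "\<And>m. cong_2pi (\<theta> m) (- integral {0..T} (\<lambda>t. Re (\<Sum>x\<in>sector n m. H3 n H2 a t x x)))"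
  shows "cong_2pi (lincomb W \<theta>) (- 8 * integral {0..T} (\<lambda>t. \<Sum>(i, j, k)\<in>triples n. a i j k t))"
proof -
  have "cong_2pi (lincomb W \<theta>)
      (lincomb W (\<lambda>m. - integral {0..T} (\<lambda>t. Re (\<Sum>x\<in>sector n m. H3 n H2 a t x x))))"
    by (rule cong_2pi_lincomb[OF W(2)]) (rule theta)
  moreover have "lincomb W (\<lambda>m. - integral {0..T} (\<lambda>t. Re (\<Sum>x\<in>sector n m. H3 n H2 a t x x)))
      = - 8 * integral {0..T} (\<lambda>t. \<Sum>(i, j, k)\<in>triples n. a i j k t)"
    using lincomb_integral_sector_trace_H3[OF W(1) H2 int] by (simp add: lincomb_minus)
  ultimately show ?thesis by simp
qed

theorem mainTheorem13:
  fixes n :: nat and T :: real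
    and H2 :: "real \<Rightarrow> op"
    and a :: "nat \<Rightarrow> nat \<Rightarrow> nat \<Rightarrow> real \<Rightarrow> real"
    and V :: "real \<Rightarrow> op"
  assumes "n \<ge> 3" and "0 \<le> T"
    and "\<And>t. t \<in> {0..T} \<Longrightarrow> hermitian_op n (H2 t)"
    and "\<And>t. t \<in> {0..T} \<Longrightarrow> u1_invariant n (H2 t)"
    and "\<And>t. t \<in> {0..T} \<Longrightarrow> two_local n (H2 t)"
    and "\<And>x y. x < dimq n \<Longrightarrow> y < dimq n \<Longrightarrow> piecewise_continuous_on 0 T (\<lambda>t. H2 t x y)"
    and "\<And>i j k. i < j \<Longrightarrow> j < k \<Longrightarrow> k < n \<Longrightarrow> piecewise_continuous_on 0 T (a i j k)"
    and "time_ordered_exp n T (H3 n H2 a) V"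
  shows "cong_2pi (beta3 n (V T)) (Delta3 n (V T)) \<and>
         cong_2pi (Delta3 n (V T))
           (-8 * integral {0..T} (\<lambda>t. \<Sum>(i,j,k)\<in>{(i,j,k). i < j \<and> j < k \<and> k < n}. a i j k t))"
proof -
  have theta: "cong_2pi (theta n (V T) m) (- integral {0..T} (\<lambda>t. Re (\<Sum>x\<in>sector n m. H3 n H2 a t x x)))"
    for m using det_on_sector_H3(2)[OF assms(2-4,6-8)] by (rule cong_2pi_theta)
  note int = det_on_sector_H3(1)[OF assms(2-4,6-8)]
  let ?I = "integral {0..T} (\<lambda>t. \<Sum>(i, j, k)\<in>triples n. a i j k t)"
  have "cong_2pi (Delta3 n (V T)) (- 8 * ?I)"
    unfolding Delta3_eq_lincomb
    by (rule cong_2pi_lincomb_theta[OF three_body_functional_delta3 delta3_coeffs_Ints assms(5) int theta])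
      (use assms(1) in auto)
  moreover have "cong_2pi (beta3 n (V T)) (- 8 * ?I)"
    unfolding beta3_eq_lincomb
    by (rule cong_2pi_lincomb_theta[OF three_body_functional_beta3 beta3_coeffs_Ints assms(5) int theta])
      (use assms(1) in auto)
  ultimately show ?thesis
    unfolding triples_def by (meson cong_2pi_sym cong_2pi_trans)
qed

end
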